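(* Let $A$ be a unital power-associative algebra over a field $F$ of characteristic zero such that $A=F1\oplus N$ as vector spaces, where $N$ is a subalgebra in which every element is nilpotent. Then every Rota–Baxter operator $R$ of nonzero weight $\lambda$ on $A$ is splitting, and, up to replacing $R$ by $\phi(R)=-R-\lambda\,\mathrm{id}$, we have $R(1)=0$.
   Context: A linear operator $R\colon A\to A$ is a Rota–Baxter operator of weight $\lambda$ if $R(x)R(y)=R(R(x)y+xR(y)+\lambda xy)$ for all $x,y\in A$; then $\phi(R)=-R-\lambda\,\mathrm{id}$ is also an RB-operator of weight $\lambda$. An algebra is power-associative if every element generates an associative subalgebra. An RB-operator $R$ of weight $\lambda$ is splitting if $A=A_1\oplus A_2$ as vector spaces for subalgebras $A_1,A_2$ and $R(a_1+a_2)=-\lambda a_2$ for $a_1\in A_1,a_2\in A_2$. *)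

theory Defs
  imports Main
begin

definition is_algebra :: "('k::field \<Rightarrow> 'a::ab_group_add \<Rightarrow> 'a) \<Rightarrow> ('a \<Rightarrow> 'a \<Rightarrow> 'a) \<Rightarrow> bool" where
  "is_algebra smul mult \<longleftrightarrow>
     (\<forall>c x y. smul c (x + y) = smul c x + smul c y) \<and>
     (\<forall>c d x. smul (c + d) x = smul c x + smul d x) \<and>
     (\<forall>c d x. smul c (smul d x) = smul (c * d) x) \<and>
     (\<forall>x. smul 1 x = x) \<and>
     (\<forall>x y z. mult (x + y) z = mult x z + mult y z) \<and>
     (\<forall>x y z. mult x (y + z) = mult x y + mult x z) \<and>
     (\<forall>c x y. mult (smul c x) y = smul c (mult x y)) \<and>
     (\<forall>c x y. mult x (smul c y) = smul c (mult x y))"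

definition is_unit :: "('a \<Rightarrow> 'a \<Rightarrow> 'a) \<Rightarrow> 'a \<Rightarrow> bool" where
  "is_unit mult e \<longleftrightarrow> (\<forall>x. mult e x = x \<and> mult x e = x)"

definition is_subspace :: "('k::field \<Rightarrow> 'a::ab_group_add \<Rightarrow> 'a) \<Rightarrow> 'a set \<Rightarrow> bool" where
  "is_subspace smul S \<longleftrightarrow> 0 \<in> S \<and> (\<forall>x\<in>S. \<forall>y\<in>S. x + y \<in> S) \<and> (\<forall>c. \<forall>x\<in>S. smul c x \<in> S)"

definition is_subalgebra :: "('k::field \<Rightarrow> 'a::ab_group_add \<Rightarrow> 'a) \<Rightarrow> ('a \<Rightarrow> 'a \<Rightarrow> 'a) \<Rightarrow> 'a set \<Rightarrow> bool" where
  "is_subalgebra smul mult S \<longleftrightarrow> is_subspace smul S \<and> (\<forall>x\<in>S. \<forall>y\<in>S. mult x y \<in> S)"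

definition gen_subalgebra :: "('k::field \<Rightarrow> 'a::ab_group_add \<Rightarrow> 'a) \<Rightarrow> ('a \<Rightarrow> 'a \<Rightarrow> 'a) \<Rightarrow> 'a \<Rightarrow> 'a set" where
  "gen_subalgebra smul mult x = \<Inter> {S. is_subalgebra smul mult S \<and> x \<in> S}"

definition assoc_on :: "('a \<Rightarrow> 'a \<Rightarrow> 'a) \<Rightarrow> 'a set \<Rightarrow> bool" where
  "assoc_on mult S \<longleftrightarrow> (\<forall>x\<in>S. \<forall>y\<in>S. \<forall>z\<in>S. mult (mult x y) z = mult x (mult y z))"

definition power_associative :: "('k::field \<Rightarrow> 'a::ab_group_add \<Rightarrow> 'a) \<Rightarrow> ('a \<Rightarrow> 'a \<Rightarrow> 'a) \<Rightarrow> bool" where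
  "power_associative smul mult \<longleftrightarrow> (\<forall>x. assoc_on mult (gen_subalgebra smul mult x))"

fun apow :: "('a \<Rightarrow> 'a \<Rightarrow> 'a) \<Rightarrow> 'a \<Rightarrow> nat \<Rightarrow> 'a" where
  "apow mult x 0 = x"
| "apow mult x (Suc n) = mult (apow mult x n) x"
(* apow mult x n is x^(n+1) *)

definition nilpotent_elem :: "('a::zero \<Rightarrow> 'a \<Rightarrow> 'a) \<Rightarrow> 'a \<Rightarrow> bool" where
  "nilpotent_elem mult x \<longleftrightarrow> (\<exists>n. apow mult x n = 0)"

definition is_linear :: "('k::field \<Rightarrow> 'a::ab_group_add \<Rightarrow> 'a) \<Rightarrow> ('a \<Rightarrow> 'a) \<Rightarrow> bool" where
  "is_linear smul R \<longleftrightarrow> (\<forall>x y. R (x + y) = R x + R y) \<and> (\<forall>c x. R (smul c x) = smul c (R x))"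

definition rota_baxter :: "('k::field \<Rightarrow> 'a::ab_group_add \<Rightarrow> 'a) \<Rightarrow> ('a \<Rightarrow> 'a \<Rightarrow> 'a) \<Rightarrow> 'k \<Rightarrow> ('a \<Rightarrow> 'a) \<Rightarrow> bool" where
  "rota_baxter smul mult lam R \<longleftrightarrow> is_linear smul R \<and>
     (\<forall>x y. mult (R x) (R y) = R (mult (R x) y + mult x (R y) + smul lam (mult x y)))"

definition phi_RB :: "('k::field \<Rightarrow> 'a::ab_group_add \<Rightarrow> 'a) \<Rightarrow> 'k \<Rightarrow> ('a \<Rightarrow> 'a) \<Rightarrow> ('a \<Rightarrow> 'a)" where
  "phi_RB smul lam R = (\<lambda>x. - R x - smul lam x)"

definition splitting_RB :: "('k::field \<Rightarrow> 'a::ab_group_add \<Rightarrow> 'a) \<Rightarrow> ('a \<Rightarrow> 'a \<Rightarrow> 'a) \<Rightarrow> 'k \<Rightarrow> ('a \<Rightarrow> 'a) \<Rightarrow> bool" where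
  "splitting_RB smul mult lam R \<longleftrightarrow>
     (\<exists>A1 A2. is_subalgebra smul mult A1 \<and> is_subalgebra smul mult A2 \<and>
        (\<forall>a. \<exists>a1\<in>A1. \<exists>a2\<in>A2. a = a1 + a2) \<and> A1 \<inter> A2 = {0} \<and>
        (\<forall>a1\<in>A1. \<forall>a2\<in>A2. R (a1 + a2) = - smul lam a2))"

end

theory Submission
  imports Defs
begin

text \<open>Rescale R to P = -R/\<lambda>, a Rota--Baxter operator of weight -1; then id - P is one too,
and the image of either is a subalgebra. Write P(1) = \<alpha>1 + n with n nilpotent. If \<alpha> \<noteq> 0 the
image of P contains the unipotent element 1 + n/\<alpha>; if \<alpha> = 0 the image of id - P contains 1 - n;
and a subalgebra containing 1 + n with n nilpotent contains 1 (telescope the products (1 + n)n^k).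
Once P(z) = 1, the identity P(w)P(z) = P(P(w)z + w - wz) gives P(wz) = P(P(w)z); writing
z = c1 + m and multiplying by m on the right k times yields P((\<dots>(zm)\<dots>)m) = (1 - c)^k 1, so
nilpotency of m forces c = 1, then P(m) = 0 and P(1) = 1. Hence P(1) \<in> {0, 1}, which makes P
idempotent, and the kernel and image of P split A.\<close>

locale nonassoc_algebra =
  fixes smul :: "'k::field \<Rightarrow> 'a::ab_group_add \<Rightarrow> 'a"
    and mult :: "'a \<Rightarrow> 'a \<Rightarrow> 'a"
  assumes algebra: "is_algebra smul mult"
begin

lemma smul_add: "smul c (x + y) = smul c x + smul c y"
  and add_smul: "smul (c + d) x = smul c x + smul d x"
  and smul_smul: "smul c (smul d x) = smul (c * d) x"
  and smul_one: "smul 1 x = x"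
  and mult_add_left: "mult (x + y) z = mult x z + mult y z"
  and mult_add_right: "mult x (y + z) = mult x y + mult x z"
  and mult_smul_left: "mult (smul c x) y = smul c (mult x y)"
  and mult_smul_right: "mult x (smul c y) = smul c (mult x y)"
  using algebra unfolding is_algebra_def by auto

lemma smul_zero: "smul c 0 = 0"
  using smul_add[of c 0 0] by simp

lemma zero_smul: "smul 0 x = 0"
  using add_smul[of 0 0 x] by simp

lemma smul_minus: "smul c (- x) = - smul c x"
  using smul_add[of c "- x" x] by (simp add: smul_zero eq_neg_iff_add_eq_0)

lemma minus_smul: "smul (- c) x = - smul c x"
  using add_smul[of "- c" c x] by (simp add: zero_smul eq_neg_iff_add_eq_0)

lemma smul_diff: "smul c (x - y) = smul c x - smul c y"
  using smul_add[of c x "- y"] by (simp add: smul_minus)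

lemma diff_smul: "smul (c - d) x = smul c x - smul d x"
  using add_smul[of c "- d" x] by (simp add: minus_smul)

lemma mult_zero_left: "mult 0 x = 0"
  using mult_add_left[of 0 0 x] by simp

lemma mult_zero_right: "mult x 0 = 0"
  using mult_add_right[of x 0 0] by simp

lemma mult_minus_left: "mult (- x) y = - mult x y"
  using mult_add_left[of "- x" x y] by (simp add: mult_zero_left eq_neg_iff_add_eq_0)

lemma mult_minus_right: "mult x (- y) = - mult x y"
  using mult_add_right[of x "- y" y] by (simp add: mult_zero_right eq_neg_iff_add_eq_0)

lemma mult_diff_left: "mult (x - y) z = mult x z - mult y z"
  using mult_add_left[of x "- y" z] by (simp add: mult_minus_left)

lemma mult_diff_right: "mult x (y - z) = mult x y - mult x z"
  using mult_add_right[of x y "- z"] by (simp add: mult_minus_right)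

lemma smul_eq_0_iff: "c \<noteq> 0 \<Longrightarrow> smul c x = 0 \<longleftrightarrow> x = 0"
  by (metis smul_smul smul_zero smul_one field_class.field_inverse)

lemma apow_smul: "apow mult (smul c x) k = smul (c ^ Suc k) (apow mult x k)"
  by (induction k) (simp_all add: mult_smul_left mult_smul_right smul_smul mult.commute)

lemma nilpotent_elem_smul: "nilpotent_elem mult x \<Longrightarrow> nilpotent_elem mult (smul c x)"
  unfolding nilpotent_elem_def by (metis apow_smul smul_zero)

lemmas smul_mult_simps = smul_add smul_smul smul_one smul_zero zero_smul smul_minus minus_smul smul_diff
  mult_add_left mult_add_right mult_smul_left mult_smul_right mult_zero_left mult_zero_right
  mult_minus_left mult_minus_right mult_diff_left mult_diff_right

lemma subalgebra_diff:
  assumes "is_subalgebra smul mult S" "x \<in> S" "y \<in> S"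
  shows "x - y \<in> S"
  using assms smul_add[of "-1"] unfolding is_subalgebra_def is_subspace_def
  by (metis diff_conv_add_uminus minus_smul smul_one)

context
  fixes lam R assumes RB: "rota_baxter smul mult lam R"
begin

lemma rb_add: "R (x + y) = R x + R y"
  and rb_smul: "R (smul c x) = smul c (R x)"
  and rb_identity: "mult (R x) (R y) = R (mult (R x) y + mult x (R y) + smul lam (mult x y))"
  using RB unfolding rota_baxter_def is_linear_def by blast+

lemma rb_zero: "R 0 = 0"
  using rb_add[of 0 0] by simp

lemma rb_minus: "R (- x) = - R x"
  using rb_add[of "- x" x] by (simp add: rb_zero eq_neg_iff_add_eq_0)

lemma rb_diff: "R (x - y) = R x - R y"
  using rb_add[of x "- y"] by (simp add: rb_minus)

lemmas rb_linear = rb_add rb_smul rb_zero rb_minus rb_diff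

lemma rota_baxter_scaled: "rota_baxter smul mult (c * lam) (\<lambda>x. smul c (R x))"
  unfolding rota_baxter_def is_linear_def
  by (simp add: rb_linear smul_mult_simps rb_identity mult.commute)

lemma rota_baxter_phi: "rota_baxter smul mult lam (phi_RB smul lam R)"
  unfolding rota_baxter_def is_linear_def phi_RB_def
  by (simp add: rb_linear smul_mult_simps rb_identity algebra_simps)

lemma rota_baxter_range_subalgebra: "is_subalgebra smul mult (range R)"
  unfolding is_subalgebra_def is_subspace_def
  using rb_zero by (auto simp: rb_identity rb_add[symmetric] rb_smul[symmetric] simp del: rb_add rb_smul)

lemma rota_baxter_splitting_if_square:
  assumes lam: "lam \<noteq> 0" and square: "\<And>x. R (R x) = - smul lam (R x)"
  shows "splitting_RB smul mult lam R"
proof -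
  define A1 where "A1 = {x. R x = 0}"
  define A2 where "A2 = {x. R x = - smul lam x}"
  have "is_subalgebra smul mult A1"
    unfolding is_subalgebra_def is_subspace_def A1_def
  proof (intro conjI ballI allI; simp)
    fix x y assume "R x = 0" "R y = 0"
    then show "R (mult x y) = 0"
      using rb_identity[of x y] lam by (simp add: rb_smul smul_mult_simps smul_eq_0_iff)
  qed (auto simp: rb_linear smul_zero)
  moreover have "is_subalgebra smul mult A2"
    unfolding is_subalgebra_def is_subspace_def A2_def
  proof (intro conjI ballI allI; simp)
    fix x y assume "R x = - smul lam x" "R y = - smul lam y"
    then have "smul lam (smul lam (mult x y)) = - smul lam (R (mult x y))"
      using rb_identity[of x y] by (simp add: rb_linear smul_mult_simps)
    then have "smul lam (R (mult x y) + smul lam (mult x y)) = 0"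
      by (simp add: smul_add)
    then show "R (mult x y) = - smul lam (mult x y)"
      using lam by (simp add: smul_eq_0_iff eq_neg_iff_add_eq_0)
  qed (auto simp: rb_linear smul_mult_simps mult.commute)
  moreover have "\<exists>a1\<in>A1. \<exists>a2\<in>A2. a = a1 + a2" for a
  proof (intro bexI)
    let ?a2 = "- smul (inverse lam) (R a)"
    show "a = (a - ?a2) + ?a2" by simp
    have R_a2: "R ?a2 = R a"
      using lam by (simp add: rb_minus rb_smul square smul_smul smul_minus smul_one)
    then show "a - ?a2 \<in> A1"
      unfolding A1_def mem_Collect_eq rb_diff by simp
    show "?a2 \<in> A2"
      using lam R_a2 by (simp add: A2_def smul_minus smul_smul smul_one)
  qed
  moreover have "A1 \<inter> A2 = {0}"
    using lam rb_zero by (auto simp: A1_def A2_def smul_eq_0_iff)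
  moreover have "R (a1 + a2) = - smul lam a2" if "a1 \<in> A1" "a2 \<in> A2" for a1 a2
    using that by (simp add: A1_def A2_def rb_add)
  ultimately show ?thesis
    unfolding splitting_RB_def by blast
qed

end
end

lemma alternating_eventually_zero:
  fixes f :: "nat \<Rightarrow> 'a::ab_group_add"
  assumes alternating: "\<And>j. f j = - f (Suc j)"
  shows "f (j + i) = 0 \<Longrightarrow> f j = 0"
proof (induction i arbitrary: j)
  case (Suc i)
  then have "f (Suc j) = 0" by simp
  then show ?case using alternating[of j] by simp
qed simp

locale unital_algebra = nonassoc_algebra smul mult
  for smul :: "'k::field \<Rightarrow> 'a::ab_group_add \<Rightarrow> 'a" and mult +
  fixes one :: 'a
  assumes unit: "is_unit mult one"
begin

lemma one_mult: "mult one x = x"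
  and mult_one: "mult x one = x"
  using unit unfolding is_unit_def by blast+

lemma rota_baxter_square_if_one_eigenvector:
  assumes RB: "rota_baxter smul mult lam R" and R_one: "R one = 0 \<or> R one = - smul lam one"
  shows "R (R x) = - smul lam (R x)"
  using R_one
proof
  assume "R one = 0"
  then show ?thesis
    using rb_identity[OF RB, of x one]
    by (simp add: mult_one mult_zero_right rb_linear[OF RB] eq_neg_iff_add_eq_0)
next
  assume "R one = - smul lam one"
  then show ?thesis
    using rb_identity[OF RB, of x one]
    by (simp add: mult_one mult_minus_right mult_smul_right rb_linear[OF RB])
qed

lemma iterate_mult_unit_plus:
  "((\<lambda>y. mult y n) ^^ Suc j) (smul c one + n) = smul c (apow mult n j) + apow mult n (Suc j)"
  by (induction j) (simp_all add: mult_add_left mult_smul_left one_mult)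

lemma subalgebra_one_if_unipotent:
  assumes S: "is_subalgebra smul mult S" and unipotent: "one + n \<in> S" and nil: "nilpotent_elem mult n"
  shows "one \<in> S"
proof -
  have add: "x + y \<in> S" and mult: "mult x y \<in> S" if "x \<in> S" "y \<in> S" for x y
    using S that unfolding is_subalgebra_def is_subspace_def by blast+
  have smul: "smul c x \<in> S" if "x \<in> S" for c x
    using S that unfolding is_subalgebra_def is_subspace_def by blast
  have iterate: "((\<lambda>y. mult y n) ^^ j) (one + n) \<in> S" for j
  proof (induction j)
    case (Suc j)
    let ?g = "((\<lambda>y. mult y n) ^^ j) (one + n)"
    have "mult ?g n = mult ?g (one + n) - ?g"
      by (simp add: mult_add_right mult_one)
    then show ?case
      using subalgebra_diff[OF S mult[OF Suc unipotent] Suc] by simp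
  qed (simp add: unipotent)
  have alternating: "one + smul ((-1) ^ k) (apow mult n k) \<in> S" for k
  proof (induction k)
    case (Suc k)
    have step: "one + smul ((-1) ^ Suc k) (apow mult n (Suc k)) =
      (one + smul ((-1) ^ k) (apow mult n k)) + smul ((-1) ^ Suc k) (((\<lambda>y. mult y n) ^^ Suc k) (one + n))"
      using iterate_mult_unit_plus[where n = n and j = k and c = 1] by (simp add: smul_one smul_add minus_smul)
    show ?case
      unfolding step by (rule add[OF Suc smul[OF iterate]])
  qed (simp add: unipotent smul_one)
  obtain M where "apow mult n M = 0"
    using nil unfolding nilpotent_elem_def by blast
  then show ?thesis
    using alternating[of M] by (simp add: smul_zero)
qed

lemma rota_baxter_iterate_on_preimage_of_one:
  assumes RB: "rota_baxter smul mult (-1) P" and z: "P z = one" and z_decomp: "z = smul c one + m"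
  shows "P (((\<lambda>y. mult y m) ^^ j) z) = smul ((1 - c) ^ j) one"
proof (induction j)
  case 0
  show ?case using z by (simp add: smul_one)
next
  case (Suc j)
  note P_linear = rb_linear[OF RB]
  have P_mult_z: "P (mult w z) = P (mult (P w) z)" for w
    using rb_identity[OF RB, of w z] by (simp add: z mult_one minus_smul smul_one P_linear)
  let ?w = "((\<lambda>y. mult y m) ^^ j) z"
  have "mult ?w m = mult ?w z - smul c ?w"
    by (simp add: z_decomp mult_add_right mult_smul_right mult_one)
  then have "P (mult ?w m) = P (mult ?w z) - smul c (P ?w)"
    by (simp add: P_linear)
  also have "\<dots> = P (mult (P ?w) z) - smul c (P ?w)"
    by (simp only: P_mult_z[of ?w])
  also have "\<dots> = smul ((1 - c) ^ j) one - smul c (smul ((1 - c) ^ j) one)"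
    by (simp add: Suc mult_smul_left one_mult P_linear z)
  also have "\<dots> = smul ((1 - c) ^ Suc j) one"
    by (simp add: smul_smul diff_smul[symmetric] algebra_simps)
  finally show ?case by simp
qed

end

locale unit_plus_nil_algebra = unital_algebra +
  assumes unit_plus_nil: "\<And>a. \<exists>c m. a = smul c one + m \<and> nilpotent_elem mult m"
begin

lemma rota_baxter_one_if_in_range:
  assumes RB: "rota_baxter smul mult (-1) P" and one_in_range: "one \<in> range P"
  shows "P one = one"
proof (cases "one = 0")
  case True
  then show ?thesis using rb_zero[OF RB] by simp
next
  case False
  note P_linear = rb_linear[OF RB]
  obtain z where z: "P z = one" using one_in_range by auto
  obtain c m where z_decomp: "z = smul c one + m" and "nilpotent_elem mult m"
    using unit_plus_nil by blast
  then obtain K where m_K: "apow mult m K = 0"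
    unfolding nilpotent_elem_def by blast
  note iterate = rota_baxter_iterate_on_preimage_of_one[OF RB z z_decomp]
  have "smul ((1 - c) ^ Suc K) one = 0"
    using iterate[of "Suc K", unfolded z_decomp iterate_mult_unit_plus]
    by (simp add: m_K mult_zero_left smul_zero P_linear)
  then have "(1 - c) ^ Suc K = 0"
    using False smul_eq_0_iff by blast
  then have c: "c = 1"
    by auto
  have "P (apow mult m j) = - P (apow mult m (Suc j))" for j
    using iterate[of "Suc j", unfolded z_decomp iterate_mult_unit_plus]
    by (simp add: c zero_smul smul_one P_linear eq_neg_iff_add_eq_0)
  then have "P m = 0"
    using alternating_eventually_zero[of "\<lambda>j. P (apow mult m j)" 0 K] by (simp add: m_K P_linear)
  then show ?thesis
    using z by (simp add: z_decomp c smul_one P_linear)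
qed

lemma rota_baxter_unit_value:
  assumes RB: "rota_baxter smul mult (-1) P"
  shows "P one = 0 \<or> P one = one"
proof -
  have fixes_one: "Q one = one" if RB_Q: "rota_baxter smul mult (-1) Q" and "Q x = one + n"
    and "nilpotent_elem mult n" for Q x n
  proof (rule rota_baxter_one_if_in_range[OF RB_Q])
    show "one \<in> range Q"
      using subalgebra_one_if_unipotent[OF rota_baxter_range_subalgebra[OF RB_Q]] that
      by (metis rangeI)
  qed
  obtain a n where P_one: "P one = smul a one + n" and nil: "nilpotent_elem mult n"
    using unit_plus_nil by blast
  show ?thesis
  proof (cases "a = 0")
    case False
    have "P (smul (inverse a) one) = one + smul (inverse a) n"
      using False by (simp add: rb_smul[OF RB] P_one smul_add smul_smul smul_one)
    then show ?thesis
      using fixes_one[OF RB _ nilpotent_elem_smul[OF nil]] by blast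
  next
    case True
    let ?Q = "phi_RB smul (-1) P"
    have "?Q one = one + smul (-1) n"
      using True by (simp add: phi_RB_def P_one zero_smul minus_smul smul_one)
    then have "?Q one = one"
      using fixes_one[OF rota_baxter_phi[OF RB] _ nilpotent_elem_smul[OF nil]] by blast
    then show ?thesis
      by (simp add: phi_RB_def minus_smul smul_one)
  qed
qed

end

theorem theorem9:
  fixes smul :: "'k::field_char_0 \<Rightarrow> 'a::ab_group_add \<Rightarrow> 'a"
    and mult :: "'a \<Rightarrow> 'a \<Rightarrow> 'a"
    and one :: 'a
    and N :: "'a set"
    and R :: "'a \<Rightarrow> 'a"
    and lam :: 'k
  assumes alg: "is_algebra smul mult"
    and unit: "is_unit mult one"
    and pa: "power_associative smul mult"
    and N_sub: "is_subalgebra smul mult N"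
    and N_nil: "\<forall>x\<in>N. nilpotent_elem mult x"
    and dsum: "\<forall>a. \<exists>c. \<exists>n\<in>N. a = smul c one + n"
    and dsum0: "\<forall>c. smul c one \<in> N \<longrightarrow> smul c one = 0"
    and lam_nz: "lam \<noteq> 0"
    and RB: "rota_baxter smul mult lam R"
  shows "splitting_RB smul mult lam R \<and> (R one = 0 \<or> phi_RB smul lam R one = 0)"
proof -
  interpret unit_plus_nil_algebra smul mult one
    using alg unit dsum N_nil by unfold_locales blast+
  define P where "P = (\<lambda>x. smul (- inverse lam) (R x))"
  have RB_P: "rota_baxter smul mult (-1) P"
    using rota_baxter_scaled[OF RB, of "- inverse lam"] lam_nz by (simp add: P_def)
  have R_P: "R x = smul (- lam) (P x)" for x
    using lam_nz by (simp add: P_def smul_smul smul_one)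
  have R_one: "R one = 0 \<or> R one = - smul lam one"
    using rota_baxter_unit_value[OF RB_P] by (auto simp: R_P smul_zero minus_smul)
  show ?thesis
    using rota_baxter_splitting_if_square[OF RB lam_nz rota_baxter_square_if_one_eigenvector[OF RB R_one]] R_one
    by (auto simp: phi_RB_def)
qed

end
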